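(* Let $s>1$ be constant and $G\sim G_{n,p}$ with $p=\frac{\log n+\omega(n)}{n}$, $\omega(n)\to\infty$, $np=O(\log n)$. For the Birth-Death process on $G$ started from a single mutant, w.h.p. either $X$ becomes empty or $|X|$ reaches $20/\varepsilon^3$ within $O(\varepsilon^{-3})$ iterations.
   Context: Birth-Death process: $X\subseteq[n]$ is the mutant set (fitness $s$, others fitness 1), initially a single vertex; at each step a vertex $v$ is chosen with probability proportional to fitness and a uniformly random neighbor $u$ of $v$ takes the type of $v$. An iteration is a step in which $X$ changes. $\varepsilon=1/\log\log\log n$. *)

theory Defs
  imports "HOL-Probability.Probability"
begin

definition eps :: "nat \<Rightarrow> real" where
  "eps n = 1 / ln (ln (ln (real n)))"

definition gnp :: "nat \<Rightarrow> real \<Rightarrow> (nat \<times> nat \<Rightarrow> bool) pmf" where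
  "gnp n p = Pi_pmf {(i,j). i < j \<and> j < n} False (\<lambda>_. bernoulli_pmf p)"

definition adj :: "(nat \<times> nat \<Rightarrow> bool) \<Rightarrow> nat \<Rightarrow> nat \<Rightarrow> bool" where
  "adj g u v \<longleftrightarrow> u \<noteq> v \<and> g (min u v, max u v)"

definition fitness :: "real \<Rightarrow> nat set \<Rightarrow> nat \<Rightarrow> real" where
  "fitness s X v = (if v \<in> X then s else 1)"

definition bd_step :: "real \<Rightarrow> nat \<Rightarrow> (nat \<times> nat \<Rightarrow> bool) \<Rightarrow> nat set \<Rightarrow> nat set pmf" where
  "bd_step s n g X =
     do {
       v \<leftarrow> pmf_of_list (map (\<lambda>v. (v, fitness s X v / (\<Sum>w<n. fitness s X w))) [0..<n]);
       let N = {u. u < n \<and> adj g v u};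
       if N = {} then return_pmf X
       else do {
         u \<leftarrow> pmf_of_set N;
         return_pmf (if v \<in> X then insert u X else X - {u})
       }
     }"

text \<open>One iteration = the state after the next step in which X changes
  (the process conditioned on changing; if no change is possible, X stays).\<close>
definition bd_iter :: "real \<Rightarrow> nat \<Rightarrow> (nat \<times> nat \<Rightarrow> bool) \<Rightarrow> nat set \<Rightarrow> nat set pmf" where
  "bd_iter s n g X =
     (if measure_pmf.prob (bd_step s n g X) {Y. Y \<noteq> X} = 0 then return_pmf X
      else cond_pmf (bd_step s n g X) {Y. Y \<noteq> X})"

fun reach :: "real \<Rightarrow> nat \<Rightarrow> (nat \<times> nat \<Rightarrow> bool) \<Rightarrow> real \<Rightarrow> nat \<Rightarrow> nat set \<Rightarrow> bool pmf" where
  "reach s n g B 0 X = return_pmf (X = {} \<or> real (card X) \<ge> B)"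
| "reach s n g B (Suc T) X =
     (if X = {} \<or> real (card X) \<ge> B then return_pmf True
      else bind_pmf (bd_iter s n g X) (reach s n g B T))"

end

theory Submission
  imports Defs "HOL-Real_Asymp.Real_Asymp"
begin

text \<open>
  Let \<open>D = n p\<close> and fix \<open>\<eta> > 0\<close> with \<open>r = (1 + \<eta>) / (1 - \<eta>) < s\<close>.  If every vertex within
  distance \<open>L + 1\<close> of the initial mutant has degree in \<open>[(1 - \<eta>) D, (1 + \<eta>) D]\<close>, then as long
  as \<open>0 < |X| < (1 - \<eta>) D\<close> an iteration adds a mutant with probability at least
  \<open>q = s / (s + r) > 1 / 2\<close>: counting the edges leaving \<open>X\<close> from both ends shows that the
  fitness-weighted rate of births across the boundary beats that of deaths.  Comparing \<open>|X|\<close> with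
  a biased walk via the supermartingale \<open>z\<^bsup>|X|\<^esup>\<close>, where \<open>h = q z + (1 - q) / z < 1\<close>, the
  process is still undecided after \<open>L\<close> iterations with probability at most \<open>h\<^sup>L z\<^bsup>1 - B\<^esup>\<close>,
  which is small for \<open>B = 20 / \<epsilon>\<^sup>3\<close> and \<open>L = C / \<epsilon>\<^sup>3\<close> with \<open>C\<close> large enough.

  A graph violating the degree condition contains a path of at most \<open>L + 1\<close> edges from the
  initial mutant to a vertex of atypical degree.  The path edges are independent of the other edges
  at that vertex, so a union bound over paths and a Chernoff bound give the probability
  \<open>(L + 2) D\<^bsup>L+1\<^esup> e\<^bsup>-\<Omega>(D)\<^esup>\<close>, which is \<open>o(1)\<close> since \<open>L = O((log log log n)\<^sup>3)\<close> and
  \<open>log n \<le> D = O(log n)\<close>.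
\<close>

lemma measure_bind_pmf:
  "measure_pmf.prob (bind_pmf M f) A = measure_pmf.expectation M (\<lambda>x. measure_pmf.prob (f x) A)"
proof -
  have "measure_pmf.prob (bind_pmf M f) A = enn2real (\<integral>\<^sup>+x. emeasure (f x) A \<partial>M)"
    by (simp add: measure_def)
  also have "(\<integral>\<^sup>+x. emeasure (f x) A \<partial>M) = (\<integral>\<^sup>+x. ennreal (measure_pmf.prob (f x) A) \<partial>M)"
    by (simp add: measure_pmf.emeasure_eq_measure)
  also have "\<dots> = ennreal (measure_pmf.expectation M (\<lambda>x. measure_pmf.prob (f x) A))"
    by (intro nn_integral_eq_integral) (auto intro!: measure_pmf.integrable_const_bound[where B=1])
  finally show ?thesis by simp
qed

lemma measure_cond_pmf:
  assumes "measure_pmf.prob M S \<noteq> 0"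
  shows "measure_pmf.prob (cond_pmf M S) A = measure_pmf.prob M (S \<inter> A) / measure_pmf.prob M S"
proof -
  have "set_pmf M \<inter> S \<noteq> {}"
    using assms measure_pmf_zero_iff by blast
  then have "measure_pmf (cond_pmf M S) = uniform_measure (measure_pmf M) S"
    by (rule cond_pmf.rep_eq)
  then show ?thesis
    using assms by (simp add: measure_pmf.emeasure_eq_measure)
qed

text \<open>Unlike the library lemma \<open>measure_pmf_prob_product\<close>, this needs no countability.\<close>
lemma measure_pair_pmf_Times:
  "measure_pmf.prob (pair_pmf M N) (A \<times> B) = measure_pmf.prob M A * measure_pmf.prob N B"
proof -
  have "measure_pmf.prob (pair_pmf M N) (A \<times> B) =
      measure_pmf.expectation M (\<lambda>x. measure_pmf.prob (map_pmf (Pair x) N) (A \<times> B))"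
    unfolding pair_pmf_def measure_bind_pmf map_pmf_def ..
  also have "\<dots> = measure_pmf.expectation M (\<lambda>x. indicator A x * measure_pmf.prob N B)"
    by (intro Bochner_Integration.integral_cong refl) (auto simp: indicator_def vimage_def)
  also have "\<dots> = measure_pmf.prob M A * measure_pmf.prob N B"
    by (simp add: measure_pmf.emeasure_eq_measure)
  finally show ?thesis .
qed

lemma measure_pmf_True_eq:
  fixes M :: "bool pmf"
  shows "measure_pmf.prob M {True} = 1 - measure_pmf.prob M {False}"
proof -
  have "UNIV - {False} = {True}" by auto
  then show ?thesis using measure_pmf.prob_compl[of "{False}" M] by simp
qed

lemma expectation_le_two_levels:
  fixes M :: "'a pmf" and f :: "'a \<Rightarrow> real"
  assumes levels: "\<And>x. x \<in> set_pmf M \<Longrightarrow> (x \<in> A \<and> f x \<le> c\<^sub>A) \<or> (x \<notin> A \<and> f x \<le> c)"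
    and bounded: "\<And>x. \<bar>f x\<bar> \<le> K" and "c\<^sub>A \<le> c" and "q \<le> measure_pmf.prob M A"
  shows "measure_pmf.expectation M f \<le> c - (c - c\<^sub>A) * q"
proof -
  have "measure_pmf.expectation M f \<le> measure_pmf.expectation M (\<lambda>x. c - (c - c\<^sub>A) * indicator A x)"
  proof (rule integral_mono_AE)
    show "integrable (measure_pmf M) f"
      using bounded by (intro measure_pmf.integrable_const_bound[where B=K]) auto
    show "integrable (measure_pmf M) (\<lambda>x. c - (c - c\<^sub>A) * indicator A x)"
      by (intro measure_pmf.integrable_const_bound[where B="\<bar>c\<bar> + \<bar>c - c\<^sub>A\<bar>"])
         (auto simp: indicator_def)
    show "AE x in measure_pmf M. f x \<le> c - (c - c\<^sub>A) * indicator A x"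
      using levels by (auto simp: AE_measure_pmf_iff indicator_def)
  qed
  also have "\<dots> = c - (c - c\<^sub>A) * measure_pmf.prob M A"
    by (subst Bochner_Integration.integral_diff) (auto simp: measure_pmf.emeasure_eq_measure)
  also have "\<dots> \<le> c - (c - c\<^sub>A) * q"
    using assms(3,4) by (intro diff_left_mono mult_left_mono) auto
  finally show ?thesis .
qed

lemma measure_bind_pmf_le:
  assumes "\<And>x. x \<notin> Bad \<Longrightarrow> measure_pmf.prob (f x) A \<le> w" and w: "0 \<le> w"
  shows "measure_pmf.prob (bind_pmf M f) A \<le> measure_pmf.prob M Bad + w"
proof -
  have "measure_pmf.prob (bind_pmf M f) A = measure_pmf.expectation M (\<lambda>x. measure_pmf.prob (f x) A)"
    by (rule measure_bind_pmf)
  also have "\<dots> \<le> measure_pmf.expectation M (\<lambda>x. indicator Bad x + w)"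
  proof (rule integral_mono)
    show "integrable (measure_pmf M) (\<lambda>x. measure_pmf.prob (f x) A)"
      by (intro measure_pmf.integrable_const_bound[where B=1]) auto
    show "integrable (measure_pmf M) (\<lambda>x. indicator Bad x + w)"
      using w by (intro measure_pmf.integrable_const_bound[where B="1 + w"]) (auto simp: indicator_def)
    show "measure_pmf.prob (f x) A \<le> indicator Bad x + w" for x
    proof (cases "x \<in> Bad")
      case True
      have "measure_pmf.prob (f x) A \<le> 1 + w" using measure_pmf.prob_le_1[of "f x" A] w by linarith
      then show ?thesis using True by simp
    qed (use assms in simp)
  qed
  also have "\<dots> = measure_pmf.prob M Bad + w"
    by (simp add: measure_pmf.emeasure_eq_measure)
  finally show ?thesis .
qed


section \<open>Chernoff bounds for independent coins\<close>

lemma measure_Pi_bernoulli_split: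
  assumes I: "finite I" and E\<^sub>1: "E\<^sub>1 \<subseteq> I" and disj: "E\<^sub>1 \<inter> E\<^sub>2 = {}"
    and p: "0 \<le> p" "p \<le> 1"
  shows "measure_pmf.prob (Pi_pmf I False (\<lambda>_. bernoulli_pmf p))
           {f. (\<forall>e\<in>E\<^sub>1. f e) \<and> P (card {e\<in>E\<^sub>2. f e})}
       = p ^ card E\<^sub>1 * measure_pmf.prob (Pi_pmf (I - E\<^sub>1) False (\<lambda>_. bernoulli_pmf p))
           {f. P (card {e\<in>E\<^sub>2. f e})}"
proof -
  have fin: "finite E\<^sub>1" using I E\<^sub>1 finite_subset by blast
  define merge :: "('a \<Rightarrow> bool) \<times> ('a \<Rightarrow> bool) \<Rightarrow> 'a \<Rightarrow> bool"
    where "merge = (\<lambda>(f, g) x. if x \<in> E\<^sub>1 then f x else g x)"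
  have "Pi_pmf I False (\<lambda>_. bernoulli_pmf p) = Pi_pmf (E\<^sub>1 \<union> (I - E\<^sub>1)) False (\<lambda>_. bernoulli_pmf p)"
    using E\<^sub>1 by (simp add: Un_absorb1)
  also have "\<dots> = map_pmf merge (pair_pmf (Pi_pmf E\<^sub>1 False (\<lambda>_. bernoulli_pmf p))
                                         (Pi_pmf (I - E\<^sub>1) False (\<lambda>_. bernoulli_pmf p)))"
    unfolding merge_def using I fin by (intro Pi_pmf_union) auto
  finally have split: "Pi_pmf I False (\<lambda>_. bernoulli_pmf p) = \<dots>" .
  have "fg \<in> merge -` {f. (\<forall>e\<in>E\<^sub>1. f e) \<and> P (card {e\<in>E\<^sub>2. f e})}
      \<longleftrightarrow> fg \<in> Pi E\<^sub>1 (\<lambda>_. {True}) \<times> {g. P (card {e\<in>E\<^sub>2. g e})}" for fg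
  proof (cases fg)
    case (Pair f g)
    have "{e\<in>E\<^sub>2. merge (f, g) e} = {e\<in>E\<^sub>2. g e}"
      using disj by (auto simp: merge_def)
    moreover have "(\<forall>e\<in>E\<^sub>1. merge (f, g) e) \<longleftrightarrow> f \<in> Pi E\<^sub>1 (\<lambda>_. {True})"
      by (auto simp: merge_def)
    ultimately show ?thesis using Pair by simp
  qed
  then have "merge -` {f. (\<forall>e\<in>E\<^sub>1. f e) \<and> P (card {e\<in>E\<^sub>2. f e})}
      = Pi E\<^sub>1 (\<lambda>_. {True}) \<times> {g. P (card {e\<in>E\<^sub>2. g e})}"
    by blast
  then show ?thesis
    using fin p by (simp add: split measure_pair_pmf_Times measure_Pi_pmf_Pi measure_pmf_single)
qed

lemma expectation_exp_count_Pi_bernoulli: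
  assumes A: "finite A" and E: "E \<subseteq> A" and p: "0 \<le> p" "p \<le> 1"
  shows "measure_pmf.expectation (Pi_pmf A False (\<lambda>_. bernoulli_pmf p))
           (\<lambda>f. exp (\<mu> * real (card {e\<in>E. f e}))) = (1 - p + p * exp \<mu>) ^ card E"
proof -
  define F where "F = (\<lambda>x (v::bool). if x \<in> E \<and> v then exp \<mu> else (1::real))"
  have prod: "exp (\<mu> * real (card {e\<in>E. f e})) = (\<Prod>x\<in>A. F x (f x))" for f
  proof -
    have "(\<Prod>x\<in>A. F x (f x)) = (\<Prod>x\<in>A \<inter> {x. x \<in> E \<and> f x}. exp \<mu>)"
      unfolding F_def using A by (simp add: prod.If_cases)
    also have "A \<inter> {x. x \<in> E \<and> f x} = {e\<in>E. f e}" using E by auto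
    finally show ?thesis by (simp add: exp_of_nat_mult[symmetric] mult.commute)
  qed
  have "measure_pmf.expectation (Pi_pmf A False (\<lambda>_. bernoulli_pmf p)) (\<lambda>f. \<Prod>x\<in>A. F x (f x))
      = (\<Prod>x\<in>A. measure_pmf.expectation (bernoulli_pmf p) (F x))"
    using A by (intro expectation_prod_Pi_pmf) (auto simp: F_def integrable_measure_pmf_finite)
  also have "\<dots> = (\<Prod>x\<in>A. if x \<in> E then 1 - p + p * exp \<mu> else 1)"
    using p by (intro prod.cong refl) (simp add: F_def algebra_simps)
  also have "\<dots> = (1 - p + p * exp \<mu>) ^ card E"
    using A E by (simp add: prod.If_cases Int_absorb1 Int_commute)
  finally show ?thesis by (simp only: prod)
qed

lemma chernoff_count_Pi_bernoulli:
  assumes A: "finite A" and E: "E \<subseteq> A" and p: "0 \<le> p" "p \<le> 1"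
  shows "measure_pmf.prob (Pi_pmf A False (\<lambda>_. bernoulli_pmf p)) {f. \<mu> * real (card {e\<in>E. f e}) \<ge> \<mu> * t}
      \<le> exp (- \<mu> * t) * (1 - p + p * exp \<mu>) ^ card E"
proof -
  let ?M = "Pi_pmf A False (\<lambda>_. bernoulli_pmf p)"
  let ?u = "\<lambda>f. exp (\<mu> * real (card {e\<in>E. f e}))"
  have "norm (?u f) \<le> exp (\<bar>\<mu>\<bar> * real (card E))" for f
  proof -
    have "card {e\<in>E. f e} \<le> card E" using A E finite_subset by (intro card_mono) auto
    then have "\<mu> * real (card {e\<in>E. f e}) \<le> \<bar>\<mu>\<bar> * real (card E)"
      by (meson abs_ge_self abs_ge_zero mult_mono of_nat_0_le_iff of_nat_mono order_trans)
    then show ?thesis by simp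
  qed
  then have "integrable (measure_pmf ?M) ?u"
    by (intro measure_pmf.integrable_const_bound) auto
  then have "measure_pmf.prob ?M {f \<in> space (measure_pmf ?M). ?u f \<ge> exp (\<mu> * t)}
      \<le> measure_pmf.expectation ?M ?u / exp (\<mu> * t)"
    by (rule integral_Markov_inequality_measure) auto
  then show ?thesis
    by (simp add: expectation_exp_count_Pi_bernoulli[OF A E p] exp_minus field_simps)
qed

lemma one_plus_power_le_exp:
  fixes x :: real
  assumes "0 \<le> 1 + x"
  shows "(1 + x) ^ m \<le> exp (real m * x)"
proof -
  have "(1 + x) ^ m \<le> exp x ^ m"
    using assms by (intro power_mono) (auto simp: exp_ge_add_one_self add.commute)
  then show ?thesis by (simp add: exp_of_nat_mult[symmetric])
qed

lemma lower_tail_exponent_le: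
  fixes \<eta> D :: real
  assumes \<eta>: "0 < \<eta>" "\<eta> \<le> 1" and D: "0 \<le> D"
  shows "D * (\<eta> / 2 * (1 - \<eta>) - \<eta> / 2 / (1 + \<eta> / 2)) + 2 * (\<eta> / 2 / (1 + \<eta> / 2))
      \<le> \<eta> - D * \<eta>^2 / 6"
proof -
  have "\<eta> / 2 * (1 - \<eta>) - \<eta> / 2 / (1 + \<eta> / 2) = - (\<eta>^2 * (1 + \<eta>) / (2 * (2 + \<eta>)))"
    using \<eta> by (simp add: field_simps power2_eq_square)
  also have "\<dots> \<le> - (\<eta>^2 / 6)"
    using \<eta> by (simp add: field_simps power2_eq_square mult_left_mono)
  finally have "D * (\<eta> / 2 * (1 - \<eta>) - \<eta> / 2 / (1 + \<eta> / 2)) \<le> D * (- (\<eta>^2 / 6))"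
    using D by (intro mult_left_mono) auto
  moreover have "2 * (\<eta> / 2 / (1 + \<eta> / 2)) \<le> \<eta>"
    using \<eta> by (simp add: field_simps)
  ultimately show ?thesis by simp
qed

text \<open>The exponent \<open>\<eta> - D \<eta>\<^sup>2 / 6\<close> absorbs the slack of \<open>2\<close> in the mean and of \<open>1\<close> in the
  count, which is what the degree of a vertex on a fixed path needs.\<close>
lemma count_lower_tail:
  assumes A: "finite A" and E: "E \<subseteq> A" and p: "0 \<le> p" "p \<le> 1"
    and \<eta>: "0 < \<eta>" "\<eta> \<le> 1" and D: "2 \<le> D" and mean: "D - 2 \<le> real (card E) * p"
  shows "measure_pmf.prob (Pi_pmf A False (\<lambda>_. bernoulli_pmf p))
           {f. real (card {e\<in>E. f e}) < (1 - \<eta>) * D} \<le> exp (\<eta> - D * \<eta>^2 / 6)"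
proof -
  let ?M = "Pi_pmf A False (\<lambda>_. bernoulli_pmf p)"
  define l where "l = \<eta> / 2"
  have l: "0 < l" "l \<le> 1" using \<eta> by (auto simp: l_def)
  have "exp (- l) \<le> 1 / (1 + l)"
    using exp_ge_add_one_self[of l] l by (simp add: exp_minus field_simps)
  then have exp_l: "exp (- l) - 1 \<le> - (l / (1 + l))"
    using l by (simp add: field_simps)
  have "measure_pmf.prob ?M {f. real (card {e\<in>E. f e}) < (1 - \<eta>) * D}
      \<le> measure_pmf.prob ?M {f. - l * real (card {e\<in>E. f e}) \<ge> - l * ((1 - \<eta>) * D)}"
    using l by (intro measure_pmf.finite_measure_mono) auto
  also have "\<dots> \<le> exp (- (- l) * ((1 - \<eta>) * D)) * (1 - p + p * exp (- l)) ^ card E"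
    by (rule chernoff_count_Pi_bernoulli[OF A E p])
  also have "(1 - p + p * exp (- l)) ^ card E \<le> exp (real (card E) * p * (exp (- l) - 1))"
  proof -
    have "0 \<le> 1 + p * (exp (- l) - 1)" using p by (simp add: algebra_simps add_increasing2)
    from one_plus_power_le_exp[OF this, of "card E"] show ?thesis by (simp add: algebra_simps)
  qed
  also have "real (card E) * p * (exp (- l) - 1) \<le> (D - 2) * (- (l / (1 + l)))"
  proof -
    have "real (card E) * p * (exp (- l) - 1) \<le> (D - 2) * (exp (- l) - 1)"
      using mean l by (intro mult_right_mono_neg) auto
    also have "\<dots> \<le> (D - 2) * (- (l / (1 + l)))"
      using D exp_l by (intro mult_left_mono) auto
    finally show ?thesis .
  qed
  also have "exp (- (- l) * ((1 - \<eta>) * D)) * exp ((D - 2) * (- (l / (1 + l))))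
      = exp (D * (l * (1 - \<eta>) - l / (1 + l)) + 2 * (l / (1 + l)))"
    by (simp add: exp_add[symmetric] algebra_simps diff_divide_distrib)
  also have "\<dots> \<le> exp (\<eta> - D * \<eta>^2 / 6)"
    using lower_tail_exponent_le[OF \<eta>, of D] D unfolding l_def by simp
  finally show ?thesis by simp
qed

lemma count_upper_tail:
  assumes A: "finite A" and E: "E \<subseteq> A" and p: "0 \<le> p" "p \<le> 1"
    and \<eta>: "0 < \<eta>" "\<eta> \<le> 1" and D: "0 \<le> D" and mean: "real (card E) * p \<le> D"
  shows "measure_pmf.prob (Pi_pmf A False (\<lambda>_. bernoulli_pmf p))
           {f. real (card {e\<in>E. f e}) + 1 > (1 + \<eta>) * D} \<le> exp (\<eta> - D * \<eta>^2 / 6)"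
proof -
  let ?M = "Pi_pmf A False (\<lambda>_. bernoulli_pmf p)"
  define l where "l = \<eta> / 2"
  have l: "0 < l" "l \<le> 1" using \<eta> by (auto simp: l_def)
  have exp_l: "exp l - 1 \<le> l + l^2" using exp_bound[of l] l by simp
  have "measure_pmf.prob ?M {f. real (card {e\<in>E. f e}) + 1 > (1 + \<eta>) * D}
      \<le> measure_pmf.prob ?M {f. l * real (card {e\<in>E. f e}) \<ge> l * ((1 + \<eta>) * D - 1)}"
    using l by (intro measure_pmf.finite_measure_mono) auto
  also have "\<dots> \<le> exp (- l * ((1 + \<eta>) * D - 1)) * (1 - p + p * exp l) ^ card E"
    by (rule chernoff_count_Pi_bernoulli[OF A E p])
  also have "(1 - p + p * exp l) ^ card E \<le> exp (real (card E) * p * (exp l - 1))"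
  proof -
    have "0 \<le> 1 + p * (exp l - 1)" using p by (simp add: algebra_simps add_increasing2)
    from one_plus_power_le_exp[OF this, of "card E"] show ?thesis by (simp add: algebra_simps)
  qed
  also have "real (card E) * p * (exp l - 1) \<le> D * (l + l^2)"
  proof -
    have "real (card E) * p * (exp l - 1) \<le> D * (exp l - 1)"
      using mean l by (intro mult_right_mono) auto
    also have "\<dots> \<le> D * (l + l^2)"
      using D exp_l by (intro mult_left_mono) auto
    finally show ?thesis .
  qed
  also have "exp (- l * ((1 + \<eta>) * D - 1)) * exp (D * (l + l^2)) = exp (\<eta> / 2 - D * \<eta>^2 / 4)"
    unfolding l_def by (simp add: exp_add[symmetric] algebra_simps power2_eq_square)
  also have "\<dots> \<le> exp (\<eta> - D * \<eta>^2 / 6)"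
    using \<eta> D by (simp add: field_simps)
  finally show ?thesis by simp
qed

lemma count_deviation:
  assumes A: "finite A" and E: "E \<subseteq> A" and p: "0 \<le> p" "p \<le> 1"
    and \<eta>: "0 < \<eta>" "\<eta> \<le> 1" and D: "2 \<le> D"
    and mean: "D - 2 \<le> real (card E) * p" "real (card E) * p \<le> D"
  shows "measure_pmf.prob (Pi_pmf A False (\<lambda>_. bernoulli_pmf p))
      {f. real (card {e\<in>E. f e}) < (1 - \<eta>) * D \<or> real (card {e\<in>E. f e}) + 1 > (1 + \<eta>) * D}
      \<le> 2 * exp (\<eta> - D * \<eta>^2 / 6)"
proof -
  let ?M = "Pi_pmf A False (\<lambda>_. bernoulli_pmf p)"
  have "measure_pmf.prob ?M
      {f. real (card {e\<in>E. f e}) < (1 - \<eta>) * D \<or> real (card {e\<in>E. f e}) + 1 > (1 + \<eta>) * D}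
      \<le> measure_pmf.prob ?M {f. real (card {e\<in>E. f e}) < (1 - \<eta>) * D}
        + measure_pmf.prob ?M {f. real (card {e\<in>E. f e}) + 1 > (1 + \<eta>) * D}"
    by (subst Collect_disj_eq) (rule measure_Un_le; simp)
  then show ?thesis
    using count_lower_tail[OF assms(1-7) mean(1)] count_upper_tail[OF assms(1-6) _ mean(2)] D
    by simp
qed

section \<open>One step of the Birth-Death process\<close>

definition neighbours :: "(nat \<times> nat \<Rightarrow> bool) \<Rightarrow> nat \<Rightarrow> nat \<Rightarrow> nat set" where
  "neighbours g n v = {u. u < n \<and> adj g v u}"

definition vertex_degree :: "(nat \<times> nat \<Rightarrow> bool) \<Rightarrow> nat \<Rightarrow> nat \<Rightarrow> nat" where
  "vertex_degree g n v = card (neighbours g n v)"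

definition total_fitness :: "real \<Rightarrow> nat \<Rightarrow> nat set \<Rightarrow> real" where
  "total_fitness s n X = (\<Sum>w<n. fitness s X w)"

definition take_type :: "nat set \<Rightarrow> nat \<Rightarrow> nat \<Rightarrow> nat set" where
  "take_type X v u = (if v \<in> X then insert u X else X - {u})"

text \<open>Up to the factor \<open>s / total_fitness s n X\<close> resp. \<open>1 / total_fitness s n X\<close>, these are the
  probabilities that a step creates resp. removes a mutant.\<close>
definition up_rate :: "(nat \<times> nat \<Rightarrow> bool) \<Rightarrow> nat \<Rightarrow> nat set \<Rightarrow> real" where
  "up_rate g n X = (\<Sum>v\<in>X. real (card (neighbours g n v - X)) / real (vertex_degree g n v))"

definition down_rate :: "(nat \<times> nat \<Rightarrow> bool) \<Rightarrow> nat \<Rightarrow> nat set \<Rightarrow> real" where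
  "down_rate g n X = (\<Sum>v\<in>{..<n} - X. real (card (neighbours g n v \<inter> X)) / real (vertex_degree g n v))"

lemma finite_neighbours [simp]: "finite (neighbours g n v)"
  by (simp add: neighbours_def)

lemma adj_commute: "adj g u v \<longleftrightarrow> adj g v u"
  by (auto simp: adj_def min_def max_def)

lemma total_fitness_pos: "0 < s \<Longrightarrow> 0 < n \<Longrightarrow> 0 < total_fitness s n X"
  unfolding total_fitness_def fitness_def by (intro sum_pos) auto

abbreviation fitness_pmf :: "real \<Rightarrow> nat \<Rightarrow> nat set \<Rightarrow> nat pmf" where
  "fitness_pmf s n X \<equiv> pmf_of_list (map (\<lambda>v. (v, fitness s X v / (\<Sum>w<n. fitness s X w))) [0..<n])"

lemma fitness_list_wf:
  assumes "0 < s" "0 < n"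
  shows "pmf_of_list_wf (map (\<lambda>v. (v, fitness s X v / (\<Sum>w<n. fitness s X w))) [0..<n])"
proof (rule pmf_of_list_wfI)
  have F: "0 < (\<Sum>w<n. fitness s X w)"
    using total_fitness_pos[OF assms] by (simp add: total_fitness_def)
  then show "\<And>x. x \<in> set (map snd (map (\<lambda>v. (v, fitness s X v / (\<Sum>w<n. fitness s X w))) [0..<n])) \<Longrightarrow> 0 \<le> x"
    using assms by (auto simp: fitness_def)
  have "sum_list (map snd (map (\<lambda>v. (v, fitness s X v / (\<Sum>w<n. fitness s X w))) [0..<n]))
      = (\<Sum>v<n. fitness s X v / (\<Sum>w<n. fitness s X w))"
    by (simp add: o_def sum_list_distinct_conv_sum_set atLeast0LessThan)
  also have "\<dots> = 1"
    using F by (simp add: sum_divide_distrib[symmetric])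
  finally show "sum_list (map snd (map (\<lambda>v. (v, fitness s X v / (\<Sum>w<n. fitness s X w))) [0..<n])) = 1" .
qed

lemma pmf_fitness_pmf:
  assumes "0 < s" "0 < n"
  shows "pmf (fitness_pmf s n X) v = (if v < n then fitness s X v / total_fitness s n X else 0)"
proof -
  have "filter (\<lambda>v'. v' = v) [0..<n] = (if v < n then [v] else [])"
    by (induction n) auto
  then show ?thesis
    by (simp add: pmf_pmf_of_list[OF fitness_list_wf[OF assms]] filter_map o_def total_fitness_def)
qed

lemma set_pmf_fitness_pmf:
  assumes "0 < s" "0 < n"
  shows "set_pmf (fitness_pmf s n X) \<subseteq> {..<n}"
  using set_pmf_of_list[OF fitness_list_wf[OF assms, of X]] by auto

lemma bd_step_eq_bind:
  "bd_step s n g X = bind_pmf (fitness_pmf s n X) (\<lambda>v.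
     if neighbours g n v = {} then return_pmf X
     else map_pmf (take_type X v) (pmf_of_set (neighbours g n v)))"
  unfolding bd_step_def
  by (intro bind_pmf_cong refl) (auto simp: Let_def neighbours_def take_type_def map_pmf_def)

text \<open>For \<open>X \<notin> A\<close> the case of an isolated \<open>v\<close> needs no special treatment: there the
  summand is \<open>0 / 0 = 0\<close>.\<close>
lemma measure_bd_step:
  assumes "0 < s" "0 < n" "X \<notin> A"
  shows "measure_pmf.prob (bd_step s n g X) A =
     (\<Sum>v<n. fitness s X v / total_fitness s n X *
        (real (card {u \<in> neighbours g n v. take_type X v u \<in> A}) / real (vertex_degree g n v)))"
proof -
  have "measure_pmf.prob (if neighbours g n v = {} then return_pmf X
          else map_pmf (take_type X v) (pmf_of_set (neighbours g n v))) A
      = real (card {u \<in> neighbours g n v. take_type X v u \<in> A}) / real (vertex_degree g n v)" for v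
    using \<open>X \<notin> A\<close>
    by (auto simp: measure_pmf_of_set vertex_degree_def Int_def vimage_def conj_commute)
  then show ?thesis
    unfolding bd_step_eq_bind measure_bind_pmf
    using set_pmf_fitness_pmf[OF assms(1,2)]
    by (subst integral_measure_pmf_real[where A="{..<n}"])
       (auto simp: pmf_fitness_pmf[OF assms(1,2)] mult.commute intro!: sum.cong)
qed

lemma measure_bd_step_grow:
  assumes "0 < s" "0 < n" "X \<subseteq> {..<n}"
  shows "measure_pmf.prob (bd_step s n g X) {Y. card Y = Suc (card X)}
       = s / total_fitness s n X * up_rate g n X"
proof -
  have fin: "finite X" using assms(3) finite_subset by blast
  have grow: "{u \<in> neighbours g n v. take_type X v u \<in> {Y. card Y = Suc (card X)}}
      = (if v \<in> X then neighbours g n v - X else {})" for v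
  proof (cases "v \<in> X")
    case True then show ?thesis using fin by (auto simp: take_type_def insert_absorb)
  next
    case False
    have "card (X - {u}) \<noteq> Suc (card X)" for u
      using card_Diff1_le[of X u] by linarith
    then show ?thesis using False by (auto simp: take_type_def)
  qed
  have "measure_pmf.prob (bd_step s n g X) {Y. card Y = Suc (card X)}
      = (\<Sum>v<n. fitness s X v / total_fitness s n X *
          (real (card (if v \<in> X then neighbours g n v - X else {})) / real (vertex_degree g n v)))"
    by (subst measure_bd_step[OF assms(1,2)]) (simp_all only: grow, simp)
  also have "\<dots> = (\<Sum>v\<in>X. s / total_fitness s n X *
          (real (card (neighbours g n v - X)) / real (vertex_degree g n v)))"
    using assms(3) by (intro sum.mono_neutral_cong_right) (auto simp: fitness_def)
  finally show ?thesis
    by (simp add: up_rate_def sum_distrib_left)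
qed

lemma measure_bd_step_change:
  assumes "0 < s" "0 < n" "X \<subseteq> {..<n}"
  shows "measure_pmf.prob (bd_step s n g X) {Y. Y \<noteq> X}
       = s / total_fitness s n X * up_rate g n X + 1 / total_fitness s n X * down_rate g n X"
proof -
  let ?term = "\<lambda>v. fitness s X v / total_fitness s n X *
     (real (card (if v \<in> X then neighbours g n v - X else neighbours g n v \<inter> X))
      / real (vertex_degree g n v))"
  have fin: "finite X" using assms(3) finite_subset by blast
  have "{u \<in> neighbours g n v. take_type X v u \<in> {Y. Y \<noteq> X}}
      = (if v \<in> X then neighbours g n v - X else neighbours g n v \<inter> X)" for v
    by (auto simp: take_type_def)
  then have "measure_pmf.prob (bd_step s n g X) {Y. Y \<noteq> X} = (\<Sum>v\<in>X \<union> ({..<n} - X). ?term v)"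
    using assms(3) by (subst measure_bd_step[OF assms(1,2)]) (simp_all add: Un_absorb1)
  also have "\<dots> = (\<Sum>v\<in>X. ?term v) + (\<Sum>v\<in>{..<n} - X. ?term v)"
    using fin by (intro sum.union_disjoint) auto
  also have "\<dots> = s / total_fitness s n X * up_rate g n X + 1 / total_fitness s n X * down_rate g n X"
    by (simp add: up_rate_def down_rate_def sum_distrib_left fitness_def)
  finally show ?thesis .
qed

lemma set_pmf_bd_step:
  assumes "0 < s" "0 < n" "Y \<in> set_pmf (bd_step s n g X)"
  shows "Y = X \<or> (\<exists>v<n. \<exists>u\<in>neighbours g n v. Y = take_type X v u)"
proof -
  obtain v where v: "v \<in> set_pmf (fitness_pmf s n X)"
    and Y: "Y \<in> set_pmf (if neighbours g n v = {} then return_pmf X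
                         else map_pmf (take_type X v) (pmf_of_set (neighbours g n v)))"
    using assms(3) unfolding bd_step_eq_bind set_bind_pmf by blast
  have "v < n" using v set_pmf_fitness_pmf[OF assms(1,2)] by blast
  then show ?thesis using Y by (auto split: if_splits)
qed

lemma sum_card_neighbours_across:
  assumes "X \<subseteq> {..<n}"
  shows "(\<Sum>v\<in>{..<n} - X. card (neighbours g n v \<inter> X)) = (\<Sum>u\<in>X. card (neighbours g n u - X))"
proof -
  have fin: "finite X" using assms finite_subset by blast
  have "(\<Sum>v\<in>{..<n} - X. card (neighbours g n v \<inter> X)) = (\<Sum>v\<in>{..<n} - X. \<Sum>u\<in>X. if adj g v u then 1 else 0)"
  proof (intro sum.cong refl)
    fix v
    have "neighbours g n v \<inter> X = X \<inter> Collect (adj g v)" using assms by (auto simp: neighbours_def)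
    then show "card (neighbours g n v \<inter> X) = (\<Sum>u\<in>X. if adj g v u then 1 else 0)"
      using fin by (simp add: sum.If_cases)
  qed
  also have "\<dots> = (\<Sum>u\<in>X. \<Sum>v\<in>{..<n} - X. if adj g u v then 1 else 0)"
    by (subst sum.swap) (simp add: adj_commute)
  also have "\<dots> = (\<Sum>u\<in>X. card (neighbours g n u - X))"
  proof (intro sum.cong refl)
    fix u
    have "neighbours g n u - X = ({..<n} - X) \<inter> Collect (adj g u)" by (auto simp: neighbours_def)
    then show "(\<Sum>v\<in>{..<n} - X. if adj g u v then 1 else 0) = card (neighbours g n u - X)"
      by (simp add: sum.If_cases)
  qed
  finally show ?thesis .
qed

text \<open>Every edge leaving \<open>X\<close> has an endpoint of degree \<open>\<ge> a\<close> outside \<open>X\<close> and one of degree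
  \<open>\<le> b\<close> inside, and it is counted from both ends by \<open>sum_card_neighbours_across\<close>.\<close>
lemma down_rate_le_up_rate:
  assumes X: "X \<subseteq> {..<n}" and a: "0 < a" and ab: "b \<le> r * a"
    and deg_out: "\<And>v u. v < n \<Longrightarrow> u \<in> X \<Longrightarrow> adj g v u \<Longrightarrow> a \<le> real (vertex_degree g n v)"
    and deg_in: "\<And>u. u \<in> X \<Longrightarrow> a \<le> real (vertex_degree g n u) \<and> real (vertex_degree g n u) \<le> b"
  shows "down_rate g n X \<le> r * up_rate g n X"
proof -
  have "down_rate g n X \<le> (\<Sum>v\<in>{..<n} - X. real (card (neighbours g n v \<inter> X)) / a)"
    unfolding down_rate_def
  proof (intro sum_mono)
    fix v assume v: "v \<in> {..<n} - X"
    show "real (card (neighbours g n v \<inter> X)) / real (vertex_degree g n v)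
        \<le> real (card (neighbours g n v \<inter> X)) / a"
    proof (cases "neighbours g n v \<inter> X = {}")
      case False
      then obtain u where "u \<in> X" "adj g v u" by (auto simp: neighbours_def)
      then have "a \<le> real (vertex_degree g n v)" using deg_out v by auto
      then show ?thesis using a by (intro divide_left_mono) auto
    qed simp
  qed
  also have "\<dots> = (\<Sum>u\<in>X. real (card (neighbours g n u - X))) / a"
    using sum_card_neighbours_across[OF X, of g]
    by (simp add: sum_divide_distrib[symmetric] flip: of_nat_sum)
  also have "\<dots> \<le> (\<Sum>u\<in>X. r * (real (card (neighbours g n u - X)) / real (vertex_degree g n u)))"
    unfolding sum_divide_distrib
  proof (intro sum_mono)
    fix u assume "u \<in> X"
    then have "1 / a \<le> r / real (vertex_degree g n u)"
      using deg_in[of u] a ab by (auto simp: field_simps)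
    then have "real (card (neighbours g n u - X)) * (1 / a)
        \<le> real (card (neighbours g n u - X)) * (r / real (vertex_degree g n u))"
      by (intro mult_left_mono) auto
    then show "real (card (neighbours g n u - X)) / a
        \<le> r * (real (card (neighbours g n u - X)) / real (vertex_degree g n u))"
      by (simp add: mult.commute)
  qed
  also have "\<dots> = r * up_rate g n X" by (simp add: up_rate_def sum_distrib_left)
  finally show ?thesis .
qed

lemma up_rate_pos:
  assumes X: "X \<subseteq> {..<n}" "X \<noteq> {}" and deg: "\<And>u. u \<in> X \<Longrightarrow> card X < vertex_degree g n u"
  shows "0 < up_rate g n X"
proof -
  have fin: "finite X" using X finite_subset by blast
  obtain v where v: "v \<in> X" using X by auto
  have "card (neighbours g n v) - card X \<le> card (neighbours g n v - X)"
    by (rule diff_card_le_card_Diff) (use fin in auto)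
  then have "0 < real (card (neighbours g n v - X)) / real (vertex_degree g n v)"
    using deg[OF v] unfolding vertex_degree_def by simp
  also have "\<dots> \<le> up_rate g n X"
    unfolding up_rate_def using fin v by (intro member_le_sum) auto
  finally show ?thesis .
qed


lemma bd_iter_eq_cond_pmf:
  assumes "0 < s" "0 < n" "X \<subseteq> {..<n}" "0 < up_rate g n X"
  shows "measure_pmf.prob (bd_step s n g X) {Y. Y \<noteq> X} \<noteq> 0"
    and "bd_iter s n g X = cond_pmf (bd_step s n g X) {Y. Y \<noteq> X}"
proof -
  have "0 \<le> down_rate g n X"
    unfolding down_rate_def by (intro sum_nonneg) auto
  moreover have "0 < total_fitness s n X" using total_fitness_pos[OF assms(1,2)] .
  ultimately have "0 < s / total_fitness s n X * up_rate g n X + 1 / total_fitness s n X * down_rate g n X"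
    using assms by (intro add_pos_nonneg) auto
  then show ne: "measure_pmf.prob (bd_step s n g X) {Y. Y \<noteq> X} \<noteq> 0"
    using assms by (simp add: measure_bd_step_change)
  then show "bd_iter s n g X = cond_pmf (bd_step s n g X) {Y. Y \<noteq> X}"
    by (simp add: bd_iter_def)
qed

lemma set_pmf_bd_iter:
  assumes "0 < s" "0 < n" "X \<subseteq> {..<n}" "0 < up_rate g n X" and Y: "Y \<in> set_pmf (bd_iter s n g X)"
  obtains (grow) u v where "u < n" "u \<notin> X" "v \<in> X" "adj g v u" "Y = insert u X"
    | (shrink) u where "u \<in> X" "Y = X - {u}"
proof -
  note iter = bd_iter_eq_cond_pmf[OF assms(1-4)]
  have step: "Y \<in> set_pmf (bd_step s n g X)" and changed: "Y \<noteq> X"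
    using Y set_cond_pmf[of "bd_step s n g X" "{Y. Y \<noteq> X}"]
      measure_pmf_zero_iff[of "bd_step s n g X" "{Y. Y \<noteq> X}"] iter by auto
  then obtain v u where v: "v < n" and u: "u \<in> neighbours g n v" and Y_eq: "Y = take_type X v u"
    using set_pmf_bd_step[OF assms(1,2) step] by blast
  show thesis
  proof (cases "v \<in> X")
    case True
    then have "u \<notin> X" using changed Y_eq by (auto simp: take_type_def insert_absorb)
    moreover have "u < n" "adj g v u" using u by (auto simp: neighbours_def)
    ultimately show thesis using grow True Y_eq by (simp add: take_type_def)
  next
    case False
    then have "u \<in> X" using changed Y_eq by (auto simp: take_type_def)
    then show thesis using shrink False Y_eq by (simp add: take_type_def)
  qed
qed

lemma measure_bd_iter_grow:
  assumes s: "0 < s" and n: "0 < n" and X: "X \<subseteq> {..<n}" "X \<noteq> {}" "real (card X) < a"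
    and a: "0 < a" and ab: "b \<le> r * a" and r: "0 < r"
    and deg_out: "\<And>v u. v < n \<Longrightarrow> u \<in> X \<Longrightarrow> adj g v u \<Longrightarrow> a \<le> real (vertex_degree g n v)"
    and deg_in: "\<And>u. u \<in> X \<Longrightarrow> a \<le> real (vertex_degree g n u) \<and> real (vertex_degree g n u) \<le> b"
  shows "s / (s + r) \<le> measure_pmf.prob (bd_iter s n g X) {Y. card Y = Suc (card X)}"
proof -
  define U where "U = up_rate g n X"
  define D where "D = down_rate g n X"
  define F where "F = total_fitness s n X"
  have F: "0 < F" unfolding F_def using total_fitness_pos[OF s n] .
  have U: "0 < U"
    unfolding U_def using X deg_in by (intro up_rate_pos) fastforce+
  have DU: "D \<le> r * U"
    unfolding D_def U_def using down_rate_le_up_rate[OF X(1) a ab deg_out deg_in] .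
  have D: "0 \<le> D" unfolding D_def down_rate_def by (intro sum_nonneg) auto
  note iter = bd_iter_eq_cond_pmf[OF s n X(1) U[unfolded U_def]]
  have "s / (s + r) = s * U / (s * U + r * U)"
    using U by (simp add: distrib_right[symmetric])
  also have "\<dots> \<le> s * U / (s * U + D)"
    using DU U s D r by (intro divide_left_mono mult_pos_pos add_pos_nonneg) auto
  also have "\<dots> = (s / F * U) / (s / F * U + 1 / F * D)"
    using F by (simp add: field_simps)
  also have "\<dots> = measure_pmf.prob (bd_step s n g X) {Y. card Y = Suc (card X)}
                   / measure_pmf.prob (bd_step s n g X) {Y. Y \<noteq> X}"
    unfolding measure_bd_step_grow[OF s n X(1)] measure_bd_step_change[OF s n X(1)] U_def D_def F_def ..
  also have "{Y. card Y = Suc (card X)} = {Y. Y \<noteq> X} \<inter> {Y. card Y = Suc (card X)}"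
    by auto
  also have "measure_pmf.prob (bd_step s n g X) \<dots> / measure_pmf.prob (bd_step s n g X) {Y. Y \<noteq> X}
      = measure_pmf.prob (bd_iter s n g X) {Y. card Y = Suc (card X)}"
    unfolding iter(2) measure_cond_pmf[OF iter(1)] ..
  finally show ?thesis .
qed

section \<open>The number of mutants as a biased random walk\<close>

fun graph_ball :: "(nat \<times> nat \<Rightarrow> bool) \<Rightarrow> nat \<Rightarrow> nat \<Rightarrow> nat \<Rightarrow> nat set" where
  "graph_ball g n x 0 = {x}"
| "graph_ball g n x (Suc m) = graph_ball g n x m \<union> {u. u < n \<and> (\<exists>v\<in>graph_ball g n x m. adj g v u)}"

lemma graph_ball_mono: "m \<le> m' \<Longrightarrow> graph_ball g n x m \<subseteq> graph_ball g n x m'"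
  by (induction m') (auto simp: le_Suc_eq)

lemma graph_ball_subset: "x < n \<Longrightarrow> graph_ball g n x m \<subseteq> {..<n}"
  by (induction m) auto

definition degrees_within :: "real \<Rightarrow> real \<Rightarrow> (nat \<times> nat \<Rightarrow> bool) \<Rightarrow> nat \<Rightarrow> nat set \<Rightarrow> bool" where
  "degrees_within a b g n S \<longleftrightarrow> (\<forall>v\<in>S. a \<le> real (vertex_degree g n v) \<and> real (vertex_degree g n v) \<le> b)"

lemma one_le_powr_of_nonpos:
  fixes z e :: real
  assumes "0 < z" "z < 1" "e \<le> 0"
  shows "1 \<le> z powr e"
proof -
  have "0 \<le> e * ln z" using assms by (intro mult_nonpos_nonpos) auto
  then show ?thesis using assms by (simp add: powr_def)
qed

lemma bd_iter_near_regular: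
  assumes s: "0 < s" and x: "x < n" and a: "0 < a" and ab: "b \<le> r * a" and r: "0 < r"
    and degs: "degrees_within a b g n (graph_ball g n x (Suc m))"
    and X: "X \<subseteq> graph_ball g n x m" "X \<noteq> {}" "real (card X) < a"
  shows "s / (s + r) \<le> measure_pmf.prob (bd_iter s n g X) {Y. card Y = Suc (card X)}"
    and "Y \<in> set_pmf (bd_iter s n g X) \<Longrightarrow>
           Y \<subseteq> graph_ball g n x (Suc m) \<and> (card Y = Suc (card X) \<or> card X = Suc (card Y))"
proof -
  have n: "0 < n" using x by simp
  have X_n: "X \<subseteq> {..<n}" using X(1) graph_ball_subset[OF x] by blast
  have fin: "finite X" using X_n finite_subset by blast
  have deg_ball: "a \<le> real (vertex_degree g n v) \<and> real (vertex_degree g n v) \<le> b"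
    if "v \<in> graph_ball g n x (Suc m)" for v
    using degs that unfolding degrees_within_def by blast
  have deg_in: "a \<le> real (vertex_degree g n u) \<and> real (vertex_degree g n u) \<le> b" if "u \<in> X" for u
    using deg_ball X(1) that by auto
  have deg_out: "a \<le> real (vertex_degree g n v)" if "v < n" "u \<in> X" "adj g v u" for u v
    using deg_ball[of v] X(1) that adj_commute[of g v u] by auto
  show "s / (s + r) \<le> measure_pmf.prob (bd_iter s n g X) {Y. card Y = Suc (card X)}"
    by (rule measure_bd_iter_grow[OF s n X_n X(2,3) a ab r deg_out deg_in])
  have "card X < vertex_degree g n u" if "u \<in> X" for u
    using deg_in[OF that] X(3) by (simp add: of_nat_less_iff[symmetric] del: of_nat_less_iff)
  then have up: "0 < up_rate g n X" by (rule up_rate_pos[OF X_n X(2)])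
  assume Y: "Y \<in> set_pmf (bd_iter s n g X)"
  show "Y \<subseteq> graph_ball g n x (Suc m) \<and> (card Y = Suc (card X) \<or> card X = Suc (card Y))"
  proof (cases rule: set_pmf_bd_iter[OF s n X_n up Y, case_names grow shrink])
    case (grow u v)
    then show ?thesis using X(1) fin by auto
  next
    case (shrink u)
    then show ?thesis using X(1) card_Suc_Diff1[OF fin shrink(1)] by auto
  qed
qed

lemma expectation_le_biased_step:
  fixes M :: "'a set pmf" and f :: "'a set \<Rightarrow> real" and z c B :: real
  assumes steps: "\<And>Y. Y \<in> set_pmf M \<Longrightarrow> card Y = Suc k \<or> k = Suc (card Y)"
    and up: "q \<le> measure_pmf.prob M {Y. card Y = Suc k}"
    and f: "\<And>Y. Y \<in> set_pmf M \<Longrightarrow> f Y \<le> c * z powr (real (card Y) - B)" "\<And>Y. \<bar>f Y\<bar> \<le> 1"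
    and z: "0 < z" "z < 1" and c: "0 \<le> c"
  shows "measure_pmf.expectation M f \<le> (q * z + (1 - q) / z) * (c * z powr (real k - B))"
proof -
  define d where "d = c * z powr (real k - B)"
  have d: "0 \<le> d" unfolding d_def using c by simp
  have "measure_pmf.expectation M f \<le> d / z - (d / z - d * z) * q"
  proof (rule expectation_le_two_levels[OF _ f(2) _ up])
    fix Y assume Y: "Y \<in> set_pmf M"
    from steps[OF Y]
    show "(Y \<in> {Y. card Y = Suc k} \<and> f Y \<le> d * z) \<or> (Y \<notin> {Y. card Y = Suc k} \<and> f Y \<le> d / z)"
    proof
      assume card: "card Y = Suc k"
      then have "real (card Y) - B = (real k - B) + 1" by simp
      then have "z powr (real (card Y) - B) = z powr (real k - B) * z"
        using z by (simp only: powr_add) simp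
      then show ?thesis using f(1)[OF Y] card by (simp add: d_def mult.assoc)
    next
      assume card: "k = Suc (card Y)"
      then have "real (card Y) - B = (real k - B) - 1" by simp
      then have "z powr (real (card Y) - B) = z powr (real k - B) / z"
        using z by (simp only: powr_diff) simp
      then show ?thesis using f(1)[OF Y] card by (simp add: d_def)
    qed
  next
    have "d * z \<le> d" using d z by (simp add: mult_left_le)
    also have "d \<le> d / z" using d z by (simp add: le_divide_eq mult_left_le)
    finally show "d * z \<le> d / z" .
  qed
  also have "d / z - (d / z - d * z) * q = (q * z + (1 - q) / z) * d"
    using z by (simp add: field_simps)
  finally show ?thesis by (simp add: d_def)
qed

lemma prob_reach_fails_le:
  fixes z B :: real
  assumes s: "0 < s" and x: "x < n" and a: "0 < a" and ab: "b \<le> r * a" and r: "0 < r"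
    and q: "q = s / (s + r)" and z: "0 < z" "z < 1" and B: "B \<le> a"
    and degs: "degrees_within a b g n (graph_ball g n x (Suc L))"
  shows "X \<subseteq> graph_ball g n x m \<Longrightarrow> m + T \<le> L \<Longrightarrow>
     measure_pmf.prob (reach s n g B T X) {False}
       \<le> (q * z + (1 - q) / z) ^ T * z powr (real (card X) - B)"
proof (induction T arbitrary: X m)
  case 0
  show ?case
  proof (cases "X = {} \<or> B \<le> real (card X)")
    case False
    then show ?thesis using one_le_powr_of_nonpos[OF z, of "real (card X) - B"] by simp
  qed simp
next
  case (Suc T)
  let ?h = "q * z + (1 - q) / z"
  have "0 < q" "q < 1" unfolding q using s r by (auto simp: field_simps)
  then have h: "0 < ?h" using z by (intro add_pos_pos) auto
  show ?case
  proof (cases "X = {} \<or> B \<le> real (card X)")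
    case True
    then show ?thesis using h by simp
  next
    case False
    then have X: "X \<noteq> {}" "real (card X) < a" using B by auto
    have "graph_ball g n x (Suc m) \<subseteq> graph_ball g n x (Suc L)"
      using Suc.prems(2) by (intro graph_ball_mono) simp
    then have "degrees_within a b g n (graph_ball g n x (Suc m))"
      using degs unfolding degrees_within_def by blast
    note iter = bd_iter_near_regular[OF s x a ab r this Suc.prems(1) X]
    have "measure_pmf.prob (reach s n g B (Suc T) X) {False}
       = measure_pmf.expectation (bd_iter s n g X) (\<lambda>Y. measure_pmf.prob (reach s n g B T Y) {False})"
      using False by (simp add: measure_bind_pmf)
    also have "\<dots> \<le> ?h * (?h ^ T * z powr (real (card X) - B))"
    proof (rule expectation_le_biased_step[OF _ _ _ _ z])
      show "card Y = Suc (card X) \<or> card X = Suc (card Y)" if "Y \<in> set_pmf (bd_iter s n g X)" for Y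
        using iter(2)[OF that] by blast
      show "measure_pmf.prob (reach s n g B T Y) {False} \<le> ?h ^ T * z powr (real (card Y) - B)"
        if "Y \<in> set_pmf (bd_iter s n g X)" for Y
        using Suc.IH[of Y "Suc m"] iter(2)[OF that] Suc.prems(2) by simp
    qed (use iter(1) q h in simp_all)
    finally show ?thesis by simp
  qed
qed

section \<open>Degrees near the initial mutant\<close>

fun is_path :: "(nat \<times> nat \<Rightarrow> bool) \<Rightarrow> nat list \<Rightarrow> bool" where
  "is_path g (x # y # ys) \<longleftrightarrow> adj g x y \<and> is_path g (y # ys)"
| "is_path g _ \<longleftrightarrow> True"

definition uedge :: "nat \<Rightarrow> nat \<Rightarrow> nat \<times> nat" where
  "uedge x y = (min x y, max x y)"

fun path_edges :: "nat list \<Rightarrow> (nat \<times> nat) set" where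
  "path_edges (x # y # ys) = insert (uedge x y) (path_edges (y # ys))"
| "path_edges _ = {}"

definition vertex_pairs :: "nat \<Rightarrow> (nat \<times> nat) set" where
  "vertex_pairs n = {(i, j). i < j \<and> j < n}"

definition rooted_paths :: "nat \<Rightarrow> nat \<Rightarrow> nat \<Rightarrow> nat list set" where
  "rooted_paths n x L = {xs. xs \<noteq> [] \<and> last xs = x \<and> distinct xs \<and> length xs \<le> L + 2 \<and> set xs \<subseteq> {..<n}}"

lemma gnp_eq_Pi_pmf: "gnp n p = Pi_pmf (vertex_pairs n) False (\<lambda>_. bernoulli_pmf p)"
  by (simp add: gnp_def vertex_pairs_def)

lemma finite_vertex_pairs [simp]: "finite (vertex_pairs n)"
  by (rule finite_subset[of _ "{..<n} \<times> {..<n}"]) (auto simp: vertex_pairs_def)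

lemma adj_iff_uedge: "adj g v u \<longleftrightarrow> v \<noteq> u \<and> g (uedge v u)"
  by (simp add: adj_def uedge_def)

lemma uedge_eq_iff: "u \<noteq> v \<Longrightarrow> uedge v u = uedge v w \<longleftrightarrow> u = w"
  by (auto simp: uedge_def min_def max_def split: if_splits)

lemma is_path_appendD: "is_path g (xs @ ys) \<Longrightarrow> is_path g ys"
proof (induction xs)
  case (Cons x xs)
  then show ?case by (cases "xs @ ys") auto
qed simp

lemma path_edges_subset: "path_edges xs \<subseteq> {e. fst e \<in> set xs \<and> snd e \<in> set xs}"
  by (induction xs rule: path_edges.induct) (auto simp: uedge_def min_def max_def)

lemma path_edges_Cons_subset: "path_edges (v # ys) \<subseteq> insert (uedge v (hd ys)) (path_edges ys)"
  by (cases ys) auto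

lemma finite_path_edges [simp]: "finite (path_edges xs)"
  by (induction xs rule: path_edges.induct) auto

lemma card_path_edges: "distinct xs \<Longrightarrow> card (path_edges xs) = length xs - 1"
proof (induction xs rule: path_edges.induct)
  case (1 x y ys)
  have "uedge x y \<notin> path_edges (y # ys)"
    using path_edges_subset[of "y # ys"] "1.prems" by (auto simp: uedge_def min_def max_def)
  then show ?case using 1 by simp
qed auto

lemma is_path_edges: "is_path g xs \<Longrightarrow> e \<in> path_edges xs \<Longrightarrow> g e"
  by (induction xs rule: path_edges.induct) (auto simp: adj_iff_uedge)

lemma path_edges_subset_vertex_pairs:
  "distinct xs \<Longrightarrow> set xs \<subseteq> {..<n} \<Longrightarrow> path_edges xs \<subseteq> vertex_pairs n"
  by (induction xs rule: path_edges.induct) (auto simp: uedge_def vertex_pairs_def min_def max_def)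

lemma graph_ball_path:
  assumes "x < n" "v \<in> graph_ball g n x k"
  shows "\<exists>xs. xs \<noteq> [] \<and> hd xs = v \<and> last xs = x \<and> distinct xs \<and> length xs \<le> Suc k
           \<and> set xs \<subseteq> {..<n} \<and> is_path g xs"
  using assms(2)
proof (induction k arbitrary: v)
  case 0
  then show ?case using assms(1) by (intro exI[of _ "[x]"]) auto
next
  case (Suc k)
  show ?case
  proof (cases "v \<in> graph_ball g n x k")
    case True
    from Suc.IH[OF True] obtain xs where "xs \<noteq> [] \<and> hd xs = v \<and> last xs = x \<and> distinct xs \<and>
      length xs \<le> Suc k \<and> set xs \<subseteq> {..<n} \<and> is_path g xs" by blast
    then show ?thesis by (intro exI[of _ xs]) auto
  next
    case False
    then obtain w where w: "w \<in> graph_ball g n x k" "adj g w v" "v < n" using Suc.prems by auto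
    from Suc.IH[OF w(1)] obtain xs where xs: "xs \<noteq> []" "hd xs = w" "last xs = x" "distinct xs"
      "length xs \<le> Suc k" "set xs \<subseteq> {..<n}" "is_path g xs" by blast
    show ?thesis
    proof (cases "v \<in> set xs")
      case True
      define ys where "ys = dropWhile (\<lambda>y. y \<noteq> v) xs"
      have split: "xs = takeWhile (\<lambda>y. y \<noteq> v) xs @ ys" by (simp add: ys_def)
      have "ys \<noteq> []" using True by (auto simp: ys_def dropWhile_eq_Nil_conv)
      moreover have "hd ys = v"
        using \<open>ys \<noteq> []\<close> hd_dropWhile[of "\<lambda>y. y \<noteq> v" xs] by (auto simp: ys_def)
      moreover have "last ys = x" using xs(3) \<open>ys \<noteq> []\<close> split by (metis last_appendR)
      moreover have "distinct ys" using xs(4) split by (metis distinct_append)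
      moreover have "set ys \<subseteq> {..<n}" using xs(6) split by (metis set_append Un_subset_iff)
      moreover have "length ys \<le> Suc (Suc k)" using xs(5) split by (metis le_SucI length_append le_add2 order_trans)
      moreover have "is_path g ys" using xs(7) split by (metis is_path_appendD)
      ultimately show ?thesis by (intro exI[of _ ys]) auto
    next
      case False
      have "xs = w # tl xs" using xs(1,2) by (cases xs) auto
      then have "is_path g (v # xs)" using xs(7) w(2) adj_commute[of g w v] by (metis is_path.simps(1))
      then show ?thesis using xs False w(3) by (intro exI[of _ "v # xs"]) auto
    qed
  qed
qed

lemma finite_rooted_paths: "finite (rooted_paths n x L)"
  by (rule finite_subset[OF _ finite_lists_length_le[of "{..<n}" "L + 2"]])
     (auto simp: rooted_paths_def)

lemma card_lists_last_le:
  "card {xs. length xs = Suc k \<and> last xs = x \<and> set xs \<subseteq> {..<n}} \<le> n ^ k"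
proof -
  have "{xs. length xs = Suc k \<and> last xs = x \<and> set xs \<subseteq> {..<n}}
      \<subseteq> (\<lambda>ys. ys @ [x]) ` {ys. set ys \<subseteq> {..<n} \<and> length ys = k}"
  proof
    fix xs assume xs: "xs \<in> {xs. length xs = Suc k \<and> last xs = x \<and> set xs \<subseteq> {..<n}}"
    then have "xs \<noteq> []" "last xs = x" by auto
    then have "xs = butlast xs @ [x]" using append_butlast_last_id[of xs] by simp
    moreover have "set (butlast xs) \<subseteq> {..<n}" "length (butlast xs) = k"
      using xs in_set_butlastD[of _ xs] by auto
    ultimately show "xs \<in> (\<lambda>ys. ys @ [x]) ` {ys. set ys \<subseteq> {..<n} \<and> length ys = k}" by blast
  qed
  then have "card {xs. length xs = Suc k \<and> last xs = x \<and> set xs \<subseteq> {..<n}}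
      \<le> card ((\<lambda>ys. ys @ [x]) ` {ys. set ys \<subseteq> {..<n} \<and> length ys = k})"
    by (intro card_mono finite_imageI finite_lists_length_eq) auto
  also have "\<dots> \<le> card {ys. set ys \<subseteq> {..<n} \<and> length ys = k}"
    by (intro card_image_le finite_lists_length_eq) simp
  also have "\<dots> = n ^ k" by (simp add: card_lists_length_eq)
  finally show ?thesis .
qed

lemma sum_rooted_paths_le:
  assumes p: "0 \<le> p" and D: "1 \<le> real n * p"
  shows "(\<Sum>xs\<in>rooted_paths n x L. p ^ (length xs - 1)) \<le> real (L + 2) * (real n * p) ^ (L + 1)"
proof -
  define S where "S k = {xs. length xs = Suc k \<and> last xs = x \<and> set xs \<subseteq> {..<n}}" for k
  have fin: "finite (S k)" for k
    by (rule finite_subset[OF _ finite_lists_length_eq[of "{..<n}" "Suc k"]]) (auto simp: S_def)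
  have "rooted_paths n x L \<subseteq> (\<Union>k\<le>L + 1. S k)"
  proof
    fix xs assume "xs \<in> rooted_paths n x L"
    then have "xs \<in> S (length xs - 1)" "length xs - 1 \<in> {..L + 1}"
      unfolding rooted_paths_def S_def by auto
    then show "xs \<in> (\<Union>k\<le>L + 1. S k)" by blast
  qed
  then have "(\<Sum>xs\<in>rooted_paths n x L. p ^ (length xs - 1)) \<le> (\<Sum>xs\<in>(\<Union>k\<le>L + 1. S k). p ^ (length xs - 1))"
    using fin p by (intro sum_mono2) auto
  also have "\<dots> = (\<Sum>k\<le>L + 1. \<Sum>xs\<in>S k. p ^ (length xs - 1))"
    using fin by (intro sum.UNION_disjoint) (auto simp: S_def)
  also have "\<dots> = (\<Sum>k\<le>L + 1. real (card (S k)) * p ^ k)"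
    by (intro sum.cong refl) (simp add: S_def)
  also have "\<dots> \<le> (\<Sum>k\<le>L + 1. (real n * p) ^ (L + 1))"
  proof (intro sum_mono)
    fix k assume "k \<in> {..L + 1}"
    have "real (card (S k)) * p ^ k \<le> real n ^ k * p ^ k"
      using card_lists_last_le[of k x n] p unfolding S_def
      by (intro mult_right_mono) (auto simp flip: of_nat_power)
    also have "\<dots> = (real n * p) ^ k" by (simp add: power_mult_distrib)
    also have "\<dots> \<le> (real n * p) ^ (L + 1)" using D \<open>k \<in> {..L + 1}\<close> by (intro power_increasing) auto
    finally show "real (card (S k)) * p ^ k \<le> (real n * p) ^ (L + 1)" .
  qed
  also have "\<dots> = real (L + 2) * (real n * p) ^ (L + 1)" by simp
  finally show ?thesis .
qed

text \<open>The degree of \<open>v\<close> is determined, up to the one edge to the next path vertex \<open>w\<close>, by the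
  edges from \<open>v\<close> to the vertices other than \<open>v, w\<close>, which are independent of the path.\<close>
lemma vertex_degree_star_edges:
  fixes g :: "nat \<times> nat \<Rightarrow> bool" and v w n :: nat
  defines "E \<equiv> uedge v ` ({..<n} - {v, w})"
  shows "card {e\<in>E. g e} \<le> vertex_degree g n v" "vertex_degree g n v \<le> card {e\<in>E. g e} + 1"
proof -
  have "inj_on (uedge v) ({..<n} - {v, w})"
    by (intro inj_onI) (auto simp: uedge_eq_iff)
  then have "inj_on (uedge v) {u \<in> {..<n} - {v, w}. g (uedge v u)}"
    by (rule inj_on_subset) auto
  moreover have "{e\<in>E. g e} = uedge v ` {u \<in> {..<n} - {v, w}. g (uedge v u)}"
    unfolding E_def by auto
  ultimately have card: "card {e\<in>E. g e} = card {u \<in> {..<n} - {v, w}. g (uedge v u)}"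
    by (simp add: card_image)
  have sub1: "{u \<in> {..<n} - {v, w}. g (uedge v u)} \<subseteq> neighbours g n v"
    by (auto simp: neighbours_def adj_iff_uedge)
  have sub2: "neighbours g n v \<subseteq> insert w {u \<in> {..<n} - {v, w}. g (uedge v u)}"
    by (auto simp: neighbours_def adj_iff_uedge)
  show "card {e\<in>E. g e} \<le> vertex_degree g n v"
    unfolding card vertex_degree_def by (intro card_mono sub1) simp
  have "vertex_degree g n v \<le> card (insert w {u \<in> {..<n} - {v, w}. g (uedge v u)})"
    unfolding vertex_degree_def by (intro card_mono sub2) simp
  also have "\<dots> \<le> card {e\<in>E. g e} + 1" unfolding card by (simp add: card_insert_if)
  finally show "vertex_degree g n v \<le> card {e\<in>E. g e} + 1" .
qed

lemma card_star_edges: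
  assumes "v < n"
  shows "n \<le> card (uedge v ` ({..<n} - {v, w})) + 2" "card (uedge v ` ({..<n} - {v, w})) \<le> n"
proof -
  have "card (uedge v ` ({..<n} - {v, w})) = card ({..<n} - {v, w})"
    by (intro card_image inj_onI) (auto simp: uedge_eq_iff)
  moreover have "card {..<n} - card {v, w} \<le> card ({..<n} - {v, w})"
    by (rule diff_card_le_card_Diff) auto
  moreover have "card {v, w} \<le> 2" by (cases "v = w") auto
  moreover have "card ({..<n} - {v, w}) \<le> n"
    by (rule order.trans[OF card_mono[of "{..<n}"]]) auto
  ultimately show "n \<le> card (uedge v ` ({..<n} - {v, w})) + 2" "card (uedge v ` ({..<n} - {v, w})) \<le> n"
    by auto
qed

lemma path_edges_disjoint_star_edges:
  assumes "distinct (v # ys)"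
  shows "path_edges (v # ys) \<inter> uedge v ` ({..<n} - {v, hd ys}) = {}"
proof -
  have "uedge v u \<notin> path_edges ys" for u
    using path_edges_subset[of ys] assms by (auto simp: uedge_def min_def max_def)
  then show ?thesis
    using path_edges_Cons_subset[of v ys] by (auto simp: uedge_eq_iff)
qed

lemma prob_path_atypical_degree_le:
  assumes xs: "distinct (v # ys)" "set (v # ys) \<subseteq> {..<n}"
    and p: "0 \<le> p" "p \<le> 1" and \<eta>: "0 < \<eta>" "\<eta> \<le> 1" and D: "D = real n * p" "2 \<le> D"
  shows "measure_pmf.prob (gnp n p) {g. is_path g (v # ys) \<and>
            \<not> ((1 - \<eta>) * D \<le> real (vertex_degree g n v) \<and> real (vertex_degree g n v) \<le> (1 + \<eta>) * D)}
       \<le> p ^ length ys * (2 * exp (\<eta> - D * \<eta>^2 / 6))"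
proof -
  define E\<^sub>1 where "E\<^sub>1 = path_edges (v # ys)"
  define E\<^sub>2 where "E\<^sub>2 = uedge v ` ({..<n} - {v, hd ys})"
  have "v < n" using xs by simp
  note card_E\<^sub>2 = card_star_edges[OF this, of "hd ys", folded E\<^sub>2_def]
  have mean_le: "real (card E\<^sub>2) * p \<le> D"
    using p D(1) card_E\<^sub>2(2) by (simp add: mult_right_mono)
  have "(real n - 2) * p \<le> real (card E\<^sub>2) * p"
    using p card_E\<^sub>2(1) by (intro mult_right_mono) linarith+
  then have mean_ge: "D - 2 \<le> real (card E\<^sub>2) * p" using p D(1) by (simp add: algebra_simps)
  have disj: "E\<^sub>1 \<inter> E\<^sub>2 = {}"
    unfolding E\<^sub>1_def E\<^sub>2_def by (rule path_edges_disjoint_star_edges[OF xs(1)])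
  have "E\<^sub>2 \<subseteq> vertex_pairs n"
    unfolding E\<^sub>2_def vertex_pairs_def uedge_def using \<open>v < n\<close> by (auto simp: min_def max_def)
  moreover have "E\<^sub>1 \<subseteq> vertex_pairs n"
    unfolding E\<^sub>1_def using path_edges_subset_vertex_pairs[OF xs] .
  ultimately have E: "E\<^sub>2 \<subseteq> vertex_pairs n - E\<^sub>1" "E\<^sub>1 \<subseteq> vertex_pairs n" using disj by auto
  let ?atypical = "\<lambda>c. real c < (1 - \<eta>) * D \<or> real c + 1 > (1 + \<eta>) * D"
  have atypical_event: "(\<forall>e\<in>E\<^sub>1. g e) \<and> ?atypical (card {e\<in>E\<^sub>2. g e})"
    if "is_path g (v # ys)"
      "\<not> ((1 - \<eta>) * D \<le> real (vertex_degree g n v) \<and> real (vertex_degree g n v) \<le> (1 + \<eta>) * D)" for g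
  proof
    show "\<forall>e\<in>E\<^sub>1. g e" using is_path_edges[OF that(1)] unfolding E\<^sub>1_def by blast
    have "card {e\<in>E\<^sub>2. g e} \<le> vertex_degree g n v" "vertex_degree g n v \<le> card {e\<in>E\<^sub>2. g e} + 1"
      using vertex_degree_star_edges[where g=g and v=v and w="hd ys" and n=n] unfolding E\<^sub>2_def by auto
    then have "real (card {e\<in>E\<^sub>2. g e}) \<le> real (vertex_degree g n v)"
      "real (vertex_degree g n v) \<le> real (card {e\<in>E\<^sub>2. g e}) + 1"
      using of_nat_mono[where 'a=real] by fastforce+
    then show "?atypical (card {e\<in>E\<^sub>2. g e})" using that(2) by linarith
  qed
  have "measure_pmf.prob (gnp n p) {g. is_path g (v # ys) \<and>
            \<not> ((1 - \<eta>) * D \<le> real (vertex_degree g n v) \<and> real (vertex_degree g n v) \<le> (1 + \<eta>) * D)}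
      \<le> measure_pmf.prob (gnp n p) {g. (\<forall>e\<in>E\<^sub>1. g e) \<and> ?atypical (card {e\<in>E\<^sub>2. g e})}"
    using atypical_event by (intro measure_pmf.finite_measure_mono subsetI) auto
  also have "\<dots> = p ^ card E\<^sub>1 * measure_pmf.prob (Pi_pmf (vertex_pairs n - E\<^sub>1) False (\<lambda>_. bernoulli_pmf p))
       {f. ?atypical (card {e\<in>E\<^sub>2. f e})}"
    unfolding gnp_eq_Pi_pmf using E disj p by (intro measure_Pi_bernoulli_split) auto
  also have "\<dots> \<le> p ^ card E\<^sub>1 * (2 * exp (\<eta> - D * \<eta>^2 / 6))"
    using count_deviation[OF _ E(1) p \<eta> D(2) mean_ge mean_le] p by (intro mult_left_mono) auto
  also have "card E\<^sub>1 = length ys" unfolding E\<^sub>1_def using card_path_edges[OF xs(1)] by simp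
  finally show ?thesis .
qed

lemma prob_degrees_not_within_le:
  assumes x: "x < n" and p: "0 \<le> p" "p \<le> 1" and \<eta>: "0 < \<eta>" "\<eta> \<le> 1" and D: "D = real n * p" "2 \<le> D"
  shows "measure_pmf.prob (gnp n p)
           {g. \<not> degrees_within ((1 - \<eta>) * D) ((1 + \<eta>) * D) g n (graph_ball g n x (Suc L))}
       \<le> real (L + 2) * D ^ (L + 1) * (2 * exp (\<eta> - D * \<eta>^2 / 6))"
proof -
  let ?bad = "\<lambda>xs. {g. is_path g xs \<and> \<not> ((1 - \<eta>) * D \<le> real (vertex_degree g n (hd xs))
                         \<and> real (vertex_degree g n (hd xs)) \<le> (1 + \<eta>) * D)}"
  have "{g. \<not> degrees_within ((1 - \<eta>) * D) ((1 + \<eta>) * D) g n (graph_ball g n x (Suc L))}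
      \<subseteq> (\<Union>xs\<in>rooted_paths n x L. ?bad xs)"
  proof
    fix g assume "g \<in> {g. \<not> degrees_within ((1 - \<eta>) * D) ((1 + \<eta>) * D) g n (graph_ball g n x (Suc L))}"
    then obtain v where v: "v \<in> graph_ball g n x (Suc L)"
      and atyp: "\<not> ((1 - \<eta>) * D \<le> real (vertex_degree g n v) \<and> real (vertex_degree g n v) \<le> (1 + \<eta>) * D)"
      unfolding degrees_within_def by blast
    from graph_ball_path[OF x v] obtain xs where "xs \<noteq> []" "hd xs = v" "last xs = x" "distinct xs"
      "length xs \<le> L + 2" "set xs \<subseteq> {..<n}" "is_path g xs" by auto
    then show "g \<in> (\<Union>xs\<in>rooted_paths n x L. ?bad xs)" using atyp unfolding rooted_paths_def by blast
  qed
  then have "measure_pmf.prob (gnp n p)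
           {g. \<not> degrees_within ((1 - \<eta>) * D) ((1 + \<eta>) * D) g n (graph_ball g n x (Suc L))}
      \<le> measure_pmf.prob (gnp n p) (\<Union>xs\<in>rooted_paths n x L. ?bad xs)"
    by (intro measure_pmf.finite_measure_mono) auto
  also have "\<dots> \<le> (\<Sum>xs\<in>rooted_paths n x L. measure_pmf.prob (gnp n p) (?bad xs))"
    by (intro measure_pmf.finite_measure_subadditive_finite finite_rooted_paths) auto
  also have "\<dots> \<le> (\<Sum>xs\<in>rooted_paths n x L. p ^ (length xs - 1) * (2 * exp (\<eta> - D * \<eta>^2 / 6)))"
  proof (intro sum_mono)
    fix xs assume "xs \<in> rooted_paths n x L"
    then obtain v ys where "xs = v # ys" "distinct (v # ys)" "set (v # ys) \<subseteq> {..<n}"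
      unfolding rooted_paths_def by (cases xs) auto
    then show "measure_pmf.prob (gnp n p) (?bad xs) \<le> p ^ (length xs - 1) * (2 * exp (\<eta> - D * \<eta>^2 / 6))"
      using prob_path_atypical_degree_le[OF _ _ p \<eta> D] by simp
  qed
  also have "\<dots> = (\<Sum>xs\<in>rooted_paths n x L. p ^ (length xs - 1)) * (2 * exp (\<eta> - D * \<eta>^2 / 6))"
    by (simp add: sum_distrib_right)
  also have "\<dots> \<le> real (L + 2) * D ^ (L + 1) * (2 * exp (\<eta> - D * \<eta>^2 / 6))"
    using sum_rooted_paths_le[OF p(1), of n x L] D by (intro mult_right_mono) auto
  finally show ?thesis .
qed

lemma exists_degree_slack:
  fixes s :: real
  assumes "1 < s"
  obtains \<eta> where "0 < \<eta>" "\<eta> < 1" "(1 + \<eta>) / (1 - \<eta>) < s"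
proof
  define \<eta> where "\<eta> = (s - 1) / (2 * (s + 1))"
  show "0 < \<eta>" using assms by (simp add: \<eta>_def)
  have "\<eta> < 1 / 2" using assms by (simp add: \<eta>_def field_simps)
  then show "\<eta> < 1" by simp
  have "\<eta> * (s + 1) = (s - 1) / 2" using assms by (simp add: \<eta>_def field_simps)
  then have "1 + \<eta> < s * (1 - \<eta>)" using assms by (simp add: algebra_simps)
  then show "(1 + \<eta>) / (1 - \<eta>) < s" using \<open>\<eta> < 1\<close> by (simp add: divide_less_eq)
qed

text \<open>For \<open>z = \<surd>((1 - q) / q)\<close> the rate \<open>q z + (1 - q) / z\<close> is \<open>2 \<surd>(q (1 - q)) < 1\<close>.\<close>
lemma exists_contraction_base:
  fixes q :: real
  assumes q: "1 / 2 < q" "q < 1"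
  obtains z where "0 < z" "z < 1" "q * z + (1 - q) / z < 1"
proof
  define z where "z = sqrt ((1 - q) / q)"
  have w: "0 < (1 - q) / q" "(1 - q) / q < 1" using q by (auto simp: field_simps)
  then show z: "0 < z" "z < 1" by (auto simp: z_def)
  have zz: "z * z = (1 - q) / q" using w(1) by (simp only: z_def real_sqrt_mult_self abs_of_pos)
  then have "(1 - q) / z = q * z" using z q by (simp add: field_simps)
  then have h: "q * z + (1 - q) / z = 2 * q * z" by simp
  have "(2 * q * z) * (2 * q * z) = 4 * q * (q * (z * z))" by (simp add: algebra_simps)
  also have "\<dots> = 4 * q * (1 - q)" using zz q by simp
  also have "\<dots> < 1"
  proof -
    have "0 < (2 * q - 1) * (2 * q - 1)" using q by simp
    then show ?thesis by (simp add: algebra_simps)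
  qed
  finally have "(2 * q * z) * (2 * q * z) < 1 * 1" by simp
  then show "q * z + (1 - q) / z < 1"
    unfolding h by (rule power2_less_imp_less[of _ 1, unfolded power2_eq_square]) simp
qed


lemma exists_walk_constants:
  fixes s :: real
  assumes "1 < s"
  obtains \<eta> q z h C where "0 < \<eta>" "\<eta> < 1" "q = s / (s + (1 + \<eta>) / (1 - \<eta>))"
    "0 < z" "z < 1" "h = q * z + (1 - q) / z" "0 < h" "h < 1" "C = 20 * ln z / ln h + 1" "0 < C"
proof -
  obtain \<eta> where \<eta>: "0 < \<eta>" "\<eta> < 1" "(1 + \<eta>) / (1 - \<eta>) < s"
    using exists_degree_slack[OF assms] .
  define q where "q = s / (s + (1 + \<eta>) / (1 - \<eta>))"
  have "0 < (1 + \<eta>) / (1 - \<eta>)" using \<eta> by simp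
  then have q: "1 / 2 < q" "q < 1"
    using \<eta>(3) assms unfolding q_def by (simp_all add: field_simps)
  then obtain z where z: "0 < z" "z < 1" "q * z + (1 - q) / z < 1"
    by (rule exists_contraction_base)
  define h where "h = q * z + (1 - q) / z"
  have h: "0 < h" "h < 1" unfolding h_def using z q by (auto intro!: add_pos_pos)
  then have "ln z < 0" "ln h < 0" using z by auto
  then have "0 < 20 * ln z / ln h + 1" by (intro add_pos_pos) (auto simp: zero_less_divide_iff)
  then show thesis by (rule that[OF \<eta>(1,2) q_def z(1,2) h_def h refl])
qed

lemma eventually_le_max_1_ln:
  assumes "eventually (\<lambda>n. f n \<le> K * ln (real n)) sequentially"
  shows "eventually (\<lambda>n. f n \<le> max K 1 * ln (real n)) sequentially"
  using assms eventually_ge_at_top[of 1]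
proof eventually_elim
  case (elim n)
  then have "K * ln (real n) \<le> max K 1 * ln (real n)" by (intro mult_right_mono) auto
  then show ?case using elim by linarith
qed


lemma prob_reach_fails_gnp_le:
  assumes s: "0 < s" and n: "0 < n" and p: "0 \<le> p" "p \<le> 1" and D: "D = real n * p" "2 \<le> D"
    and \<eta>: "0 < \<eta>" "\<eta> < 1" and q: "q = s / (s + (1 + \<eta>) / (1 - \<eta>))"
    and z: "0 < z" "z < 1" and B: "B \<le> (1 - \<eta>) * D"
  shows "measure_pmf.prob (bind_pmf (gnp n p) (\<lambda>g. reach s n g B L {0})) {False}
     \<le> real (L + 2) * D ^ (L + 1) * (2 * exp (\<eta> - D * \<eta>^2 / 6)) + (q * z + (1 - q) / z) ^ L * z powr (1 - B)"
proof -
  let ?good = "\<lambda>g. degrees_within ((1 - \<eta>) * D) ((1 + \<eta>) * D) g n (graph_ball g n 0 (Suc L))"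
  define r where "r = (1 + \<eta>) / (1 - \<eta>)"
  have r: "0 < r" using \<eta> by (simp add: r_def)
  have q01: "0 < q" "q < 1" unfolding q r_def[symmetric] using s r by (auto simp: field_simps)
  then have walk: "0 \<le> (q * z + (1 - q) / z) ^ L * z powr (1 - B)" using z by simp
  have "(1 + \<eta>) * D = (1 + \<eta>) / (1 - \<eta>) * ((1 - \<eta>) * D)" using \<eta> by simp
  then have "measure_pmf.prob (reach s n g B L {0}) {False} \<le> (q * z + (1 - q) / z) ^ L * z powr (1 - B)"
    if "?good g" for g
    using prob_reach_fails_le[OF s n _ _ _ q z B that, of "{0}" 0] \<eta> D by simp
  then have "measure_pmf.prob (bind_pmf (gnp n p) (\<lambda>g. reach s n g B L {0})) {False}
      \<le> measure_pmf.prob (gnp n p) {g. \<not> ?good g} + (q * z + (1 - q) / z) ^ L * z powr (1 - B)"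
    using walk by (intro measure_bind_pmf_le) auto
  also have "measure_pmf.prob (gnp n p) {g. \<not> ?good g}
      \<le> real (L + 2) * D ^ (L + 1) * (2 * exp (\<eta> - D * \<eta>^2 / 6))"
    using prob_degrees_not_within_le[OF n p \<eta>(1) _ D] \<eta> by simp
  finally show ?thesis by simp
qed

text \<open>With \<open>x = ln n\<close>, the bound of \<open>prob_degrees_not_within_le\<close> is \<open>x\<^bsup>O(\<Lambda>)\<^esup> e\<^bsup>-\<Omega>(x)\<^esup>\<close>,
  which vanishes for \<open>\<Lambda> = O((ln ln x)\<^sup>3)\<close>.\<close>
lemma path_count_term_le:
  assumes L: "real L \<le> \<Lambda>" and D: "1 \<le> D" "x \<le> D" "D \<le> K * x" and \<eta>: "0 \<le> \<eta>"
  shows "real (L + 2) * D ^ (L + 1) * (2 * exp (\<eta> - D * \<eta>^2 / 6))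
      \<le> (\<Lambda> + 2) * (K * x) powr (\<Lambda> + 1) * (2 * exp (\<eta> - \<eta>^2 / 6 * x))"
proof -
  have Kx: "1 \<le> K * x" using D by simp
  have "D ^ (L + 1) \<le> (K * x) ^ (L + 1)" using D by (intro power_mono) auto
  also have "\<dots> = (K * x) powr real (L + 1)" by (rule powr_realpow[symmetric]) (use Kx in simp)
  also have "\<dots> \<le> (K * x) powr (\<Lambda> + 1)" using Kx L by (intro powr_mono) auto
  finally have "D ^ (L + 1) \<le> (K * x) powr (\<Lambda> + 1)" .
  moreover have "x * (\<eta>^2 / 6) \<le> D * (\<eta>^2 / 6)" using D(2) by (intro mult_right_mono) auto
  then have "exp (\<eta> - D * \<eta>^2 / 6) \<le> exp (\<eta> - \<eta>^2 / 6 * x)" by (simp add: mult.commute)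
  moreover have "real (L + 2) \<le> \<Lambda> + 2" using L by simp
  ultimately show ?thesis using D(1) by (intro mult_mono) auto
qed

lemma walk_term_le:
  assumes h: "0 < h" "h < 1" and z: "0 < z" "z < 1"
    and C: "C * ln h = 20 * ln z + ln h" and L: "C * t - 1 \<le> real L"
  shows "h ^ L * z powr (1 - 20 * t) \<le> exp (ln h * t + (ln z - ln h))"
proof -
  have "h ^ L = h powr real L" using h by (simp add: powr_realpow)
  also have "\<dots> \<le> h powr (C * t - 1)" using L h by (intro powr_mono') auto
  finally have "h ^ L * z powr (1 - 20 * t) \<le> h powr (C * t - 1) * z powr (1 - 20 * t)"
    using z by (intro mult_right_mono) auto
  also have "\<dots> = exp (t * (C * ln h) - ln h + (1 - 20 * t) * ln z)"
    using h z by (simp add: powr_def exp_add[symmetric] algebra_simps)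
  also have "\<dots> = exp (ln h * t + (ln z - ln h))"
    unfolding C by (simp add: algebra_simps)
  finally show ?thesis .
qed

lemma prob_reach_fails_eventually_le:
  fixes s \<eta> q z h C :: real
  assumes s: "0 < s" and \<eta>: "0 < \<eta>" "\<eta> < 1" and q: "q = s / (s + (1 + \<eta>) / (1 - \<eta>))"
    and z: "0 < z" "z < 1" and h: "h = q * z + (1 - q) / z" "0 < h" "h < 1"
    and C: "C = 20 * ln z / ln h + 1" "0 < C"
    and \<omega>: "filterlim \<omega> at_top sequentially" and p: "\<And>n. p n = (ln (real n) + \<omega> n) / real n"
    and K: "1 \<le> K" "eventually (\<lambda>n. real n * p n \<le> K * ln (real n)) sequentially"
  shows "eventually (\<lambda>n. measure_pmf.prob
            (do { g \<leftarrow> gnp n (p n); reach s n g (20 / eps n ^ 3) (nat \<lfloor>C / eps n ^ 3\<rfloor>) {0} }) {False}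
     \<le> (C * ln (ln (ln n)) ^ 3 + 2) * (K * ln n) powr (C * ln (ln (ln n)) ^ 3 + 1)
          * (2 * exp (\<eta> - \<eta>^2 / 6 * ln n))
       + exp (ln h * ln (ln (ln n)) ^ 3 + (ln z - ln h))) sequentially"
proof -
  have "ln h < 0" using h(2,3) by simp
  then have Clnh: "C * ln h = 20 * ln z + ln h" unfolding C(1) by (simp add: field_simps)
  have "0 < 1 - \<eta>" using \<eta> by simp
  have "eventually (\<lambda>n. 0 \<le> \<omega> n) sequentially"
    using \<omega> by (simp add: filterlim_at_top)
  moreover have "eventually (\<lambda>n::nat. 2 \<le> ln (real n)) sequentially" by real_asymp
  moreover have "eventually (\<lambda>n::nat. K * ln (real n) < real n) sequentially" by real_asymp
  moreover have "eventually (\<lambda>n::nat. 0 \<le> ln (ln (ln (real n)))) sequentially" by real_asymp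
  moreover have "eventually (\<lambda>n::nat. 20 * ln (ln (ln (real n))) ^ 3 \<le> (1 - \<eta>) * ln (real n)) sequentially"
    using \<open>0 < 1 - \<eta>\<close> by real_asymp
  ultimately show ?thesis
    using K(2) eventually_gt_at_top[of 0]
  proof eventually_elim
    case (elim n)
    define t where "t = ln (ln (ln (real n))) ^ 3"
    define L where "L = nat \<lfloor>C * t\<rfloor>"
    define D where "D = real n * p n"
    have t: "0 \<le> t" using elim by (simp add: t_def)
    have L: "real L \<le> C * t" "C * t - 1 \<le> real L" using C(2) t by (auto simp: L_def)
    have "D = ln (real n) + \<omega> n" using elim by (simp add: D_def p)
    then have D: "ln (real n) \<le> D" "D \<le> K * ln (real n)" "2 \<le> D"
      using elim by (auto simp: D_def)
    have p01: "0 \<le> p n" "p n \<le> 1" using D elim by (auto simp: D_def divide_le_eq p)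
    have "(1 - \<eta>) * ln (real n) \<le> (1 - \<eta>) * D" using D(1) \<eta> by (intro mult_left_mono) auto
    then have B: "20 * t \<le> (1 - \<eta>) * D" using elim unfolding t_def by linarith
    have "measure_pmf.prob (do { g \<leftarrow> gnp n (p n); reach s n g (20 * t) L {0} }) {False}
        \<le> real (L + 2) * D ^ (L + 1) * (2 * exp (\<eta> - D * \<eta>^2 / 6)) + h ^ L * z powr (1 - 20 * t)"
      unfolding h(1) using prob_reach_fails_gnp_le[OF s _ p01 D_def D(3) \<eta> q z B] elim by simp
    also have "\<dots> \<le> (C * t + 2) * (K * ln n) powr (C * t + 1) * (2 * exp (\<eta> - \<eta>^2 / 6 * ln n))
                    + exp (ln h * t + (ln z - ln h))"
      using path_count_term_le[OF L(1) _ D(1,2)] walk_term_le[OF h(2,3) z Clnh L(2)] D \<eta>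
      by (intro add_mono) auto
    finally show ?case
      by (simp add: t_def L_def eps_def power_one_over)
  qed
qed

lemma prob_reach_fails_tendsto_0:
  fixes s \<eta> q z h C :: real
  assumes s: "0 < s" and \<eta>: "0 < \<eta>" "\<eta> < 1" and q: "q = s / (s + (1 + \<eta>) / (1 - \<eta>))"
    and z: "0 < z" "z < 1" and h: "h = q * z + (1 - q) / z" "0 < h" "h < 1"
    and C: "C = 20 * ln z / ln h + 1" "0 < C"
    and \<omega>: "filterlim \<omega> at_top sequentially" and p: "\<And>n. p n = (ln (real n) + \<omega> n) / real n"
    and K: "1 \<le> K" "eventually (\<lambda>n. real n * p n \<le> K * ln (real n)) sequentially"
  shows "(\<lambda>n. measure_pmf.prob
            (do { g \<leftarrow> gnp n (p n); reach s n g (20 / eps n ^ 3) (nat \<lfloor>C / eps n ^ 3\<rfloor>) {0} }) {False})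
         \<longlonglongrightarrow> 0"
proof -
  have "ln h < 0" using h(2,3) by simp
  then have "(\<lambda>n::nat. (C * ln (ln (ln n)) ^ 3 + 2) * (K * ln n) powr (C * ln (ln (ln n)) ^ 3 + 1)
          * (2 * exp (\<eta> - \<eta>^2 / 6 * ln n)) + exp (ln h * ln (ln (ln n)) ^ 3 + (ln z - ln h))) \<longlonglongrightarrow> 0"
    using \<eta>(1) C(2) K(1) by real_asymp
  moreover have "eventually (\<lambda>n. 0 \<le> measure_pmf.prob
      (do { g \<leftarrow> gnp n (p n); reach s n g (20 / eps n ^ 3) (nat \<lfloor>C / eps n ^ 3\<rfloor>) {0} }) {False}) sequentially"
    by (intro always_eventually allI measure_nonneg)
  ultimately show ?thesis
    using tendsto_sandwich[OF _ prob_reach_fails_eventually_le[OF assms] tendsto_const] by blast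
qed

theorem mainTheorem10:
  fixes s :: real and \<omega> :: "nat \<Rightarrow> real" and p :: "nat \<Rightarrow> real"
  assumes "s > 1"
    and "filterlim \<omega> at_top sequentially"
    and "\<And>n. p n = (ln (real n) + \<omega> n) / real n"
    and "\<exists>K. eventually (\<lambda>n. real n * p n \<le> K * ln (real n)) sequentially"
  shows "\<exists>C>0. (\<lambda>n. measure_pmf.prob
            (do { g \<leftarrow> gnp n (p n);
                  reach s n g (20 / eps n ^ 3) (nat \<lfloor>C / eps n ^ 3\<rfloor>) {0} })
            {True}) \<longlonglongrightarrow> 1"
proof -
  obtain K where K: "eventually (\<lambda>n. real n * p n \<le> K * ln (real n)) sequentially"
    using assms(4) by blast
  obtain \<eta> q z h C where params: "0 < \<eta>" "\<eta> < 1" "q = s / (s + (1 + \<eta>) / (1 - \<eta>))"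
    "0 < z" "z < 1" "h = q * z + (1 - q) / z" "0 < h" "h < 1" "C = 20 * ln z / ln h + 1" "0 < C"
    using exists_walk_constants[OF assms(1)] .
  have "(\<lambda>n. measure_pmf.prob
      (do { g \<leftarrow> gnp n (p n); reach s n g (20 / eps n ^ 3) (nat \<lfloor>C / eps n ^ 3\<rfloor>) {0} }) {False})
      \<longlonglongrightarrow> 0"
    by (rule prob_reach_fails_tendsto_0[OF _ params assms(2,3) _ eventually_le_max_1_ln[OF K]])
       (use assms(1) in simp_all)
  then have "(\<lambda>n. 1 - measure_pmf.prob
      (do { g \<leftarrow> gnp n (p n); reach s n g (20 / eps n ^ 3) (nat \<lfloor>C / eps n ^ 3\<rfloor>) {0} }) {False})
      \<longlonglongrightarrow> 1 - 0"
    by (intro tendsto_diff tendsto_const)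
  then show ?thesis
    unfolding measure_pmf_True_eq diff_zero using \<open>0 < C\<close> by (intro exI[of _ C] conjI) assumption+
qed

end
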